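(* Every probabilistic database in $\mathsf{FO}(\mathsf{TI})$ has the finite moments property.
   Context: Fix a countably infinite universe $U$. A database schema is a finite nonempty set of relation symbols with arities; facts are $R(u_1,\dots,u_{\mathrm{ar}(R)})$ with $u_i\in U$; an instance is a finite set of facts ($|D|$ = number of facts); $\mathrm{adom}(D)$ is the set of elements of $U$ occurring in $D$. A probabilistic database (PDB) is a discrete probability space $(\mathbb D,P)$ with $\mathbb D$ a nonempty countable set of instances. A PDB has the finite moments property if $\sum_{D\in\mathbb D}|D|^kP(\{D\})<\infty$ for all $k\in\mathbb N_+$. A PDB $\mathcal I$ is tuple-independent if for all pairwise distinct facts $f_1,\dots,f_k$, $\Pr_{I\sim\mathcal I}(f_1\in I,\dots,f_k\in I)=\prod_i\Pr_{I\sim\mathcal I}(f_i\in I)$. An FO-view consists of one first-order formula $\Phi_R(x_1,\dots,x_{\mathrm{ar}(R)})$ per output relation symbol $R$, evaluated under active domain semantics (quantifiers range over $\mathrm{adom}(D)$ and the formula's constants), mapping $D$ to the instance containing $R(\bar a)$ for all tuples $\bar a$ over $\mathrm{adom}(D)\cup\mathrm{adom}(\Phi_R)$ with $D\models\Phi_R[\bar a]$. The image of a PDB $(\mathbb D,P)$ under a view $V$ is the PDB on $V(\mathbb D)$ with $P'(\{D'\})=P(\{D:V(D)=D'\})$. $\mathsf{FO}(\mathsf{TI})$ is the class of images of tuple-independent PDBs under FO-views. *)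

theory Defs
  imports "HOL-Probability.Probability_Mass_Function"
          "HOL-Library.Countable" "HOL-Library.Infinite_Typeclass"
begin

text \<open>The universe U is a type 'u of class countable and infinite.
  A fact R(u1,...,un) is represented as the pair (R, [u1,...,un]).\<close>

definition schema :: "'r set \<Rightarrow> bool" where
  "schema S \<longleftrightarrow> finite S \<and> S \<noteq> {}"

definition facts :: "'r set \<Rightarrow> ('r \<Rightarrow> nat) \<Rightarrow> ('r \<times> 'u list) set" where
  "facts S ar = {(R, us). R \<in> S \<and> length us = ar R}"

definition is_instance :: "'r set \<Rightarrow> ('r \<Rightarrow> nat) \<Rightarrow> ('r \<times> 'u list) set \<Rightarrow> bool" where
  "is_instance S ar D \<longleftrightarrow> finite D \<and> D \<subseteq> facts S ar"

definition adom :: "('r \<times> 'u list) set \<Rightarrow> 'u set" where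
  "adom D = (\<Union>(R, us)\<in>D. set us)"

text \<open>A PDB is a discrete probability distribution on instances (a pmf whose support
  consists of instances; the support is automatically countable).\<close>

definition is_pdb :: "'r set \<Rightarrow> ('r \<Rightarrow> nat) \<Rightarrow> ('r \<times> 'u list) set pmf \<Rightarrow> bool" where
  "is_pdb S ar P \<longleftrightarrow> (\<forall>D\<in>set_pmf P. is_instance S ar D)"

definition finite_moments :: "('r \<times> 'u list) set pmf \<Rightarrow> bool" where
  "finite_moments P \<longleftrightarrow>
     (\<forall>k::nat. k \<ge> 1 \<longrightarrow> (\<lambda>D. real (card D) ^ k * pmf P D) summable_on set_pmf P)"

definition tuple_independent :: "'r set \<Rightarrow> ('r \<Rightarrow> nat) \<Rightarrow> ('r \<times> 'u list) set pmf \<Rightarrow> bool" where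
  "tuple_independent S ar P \<longleftrightarrow>
     (\<forall>F. finite F \<and> F \<noteq> {} \<and> F \<subseteq> facts S ar \<longrightarrow>
        measure_pmf.prob P {I. F \<subseteq> I} = (\<Prod>f\<in>F. measure_pmf.prob P {I. f \<in> I}))"

datatype 'u fo_term = Var nat | Cst 'u

datatype ('r, 'u) fo =
    Atom 'r "'u fo_term list"
  | Eq "'u fo_term" "'u fo_term"
  | Neg "('r, 'u) fo"
  | Conj "('r, 'u) fo" "('r, 'u) fo"
  | Disj "('r, 'u) fo" "('r, 'u) fo"
  | Ex nat "('r, 'u) fo"
  | All nat "('r, 'u) fo"

fun term_fv :: "'u fo_term \<Rightarrow> nat set" where
  "term_fv (Var x) = {x}"
| "term_fv (Cst c) = {}"

fun term_consts :: "'u fo_term \<Rightarrow> 'u set" where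
  "term_consts (Var x) = {}"
| "term_consts (Cst c) = {c}"

fun fv :: "('r, 'u) fo \<Rightarrow> nat set" where
  "fv (Atom R ts) = (\<Union>t\<in>set ts. term_fv t)"
| "fv (Eq t1 t2) = term_fv t1 \<union> term_fv t2"
| "fv (Neg \<phi>) = fv \<phi>"
| "fv (Conj \<phi> \<psi>) = fv \<phi> \<union> fv \<psi>"
| "fv (Disj \<phi> \<psi>) = fv \<phi> \<union> fv \<psi>"
| "fv (Ex x \<phi>) = fv \<phi> - {x}"
| "fv (All x \<phi>) = fv \<phi> - {x}"

text \<open>adom of a formula: the constants occurring in it.\<close>
fun fo_consts :: "('r, 'u) fo \<Rightarrow> 'u set" where
  "fo_consts (Atom R ts) = (\<Union>t\<in>set ts. term_consts t)"
| "fo_consts (Eq t1 t2) = term_consts t1 \<union> term_consts t2"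
| "fo_consts (Neg \<phi>) = fo_consts \<phi>"
| "fo_consts (Conj \<phi> \<psi>) = fo_consts \<phi> \<union> fo_consts \<psi>"
| "fo_consts (Disj \<phi> \<psi>) = fo_consts \<phi> \<union> fo_consts \<psi>"
| "fo_consts (Ex x \<phi>) = fo_consts \<phi>"
| "fo_consts (All x \<phi>) = fo_consts \<phi>"

fun eval_term :: "(nat \<Rightarrow> 'u) \<Rightarrow> 'u fo_term \<Rightarrow> 'u" where
  "eval_term A (Var x) = A x"
| "eval_term A (Cst c) = c"

fun sat :: "'u set \<Rightarrow> ('r \<times> 'u list) set \<Rightarrow> (nat \<Rightarrow> 'u) \<Rightarrow> ('r, 'u) fo \<Rightarrow> bool" where
  "sat M D A (Atom R ts) \<longleftrightarrow> (R, map (eval_term A) ts) \<in> D"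
| "sat M D A (Eq t1 t2) \<longleftrightarrow> eval_term A t1 = eval_term A t2"
| "sat M D A (Neg \<phi>) \<longleftrightarrow> \<not> sat M D A \<phi>"
| "sat M D A (Conj \<phi> \<psi>) \<longleftrightarrow> sat M D A \<phi> \<and> sat M D A \<psi>"
| "sat M D A (Disj \<phi> \<psi>) \<longleftrightarrow> sat M D A \<phi> \<or> sat M D A \<psi>"
| "sat M D A (Ex x \<phi>) \<longleftrightarrow> (\<exists>a\<in>M. sat M D (A(x := a)) \<phi>)"
| "sat M D A (All x \<phi>) \<longleftrightarrow> (\<forall>a\<in>M. sat M D (A(x := a)) \<phi>)"

text \<open>Active domain semantics of a formula \<Phi> on D: quantifiers range over
  adom D \<union> adom \<Phi>.  The tuple a = [a_1..a_n] is assigned to variables 0..n-1.\<close>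
definition sat_adom :: "('r \<times> 'u list) set \<Rightarrow> ('r, 'u) fo \<Rightarrow> 'u list \<Rightarrow> bool" where
  "sat_adom D \<Phi> as = sat (adom D \<union> fo_consts \<Phi>) D (\<lambda>i. as ! i) \<Phi>"

definition fo_view :: "'s set \<Rightarrow> ('s \<Rightarrow> nat) \<Rightarrow> ('s \<Rightarrow> ('r, 'u) fo) \<Rightarrow> bool" where
  "fo_view S' ar' \<Phi> \<longleftrightarrow> schema S' \<and> (\<forall>R'\<in>S'. fv (\<Phi> R') \<subseteq> {..<ar' R'})"

definition apply_view ::
  "'s set \<Rightarrow> ('s \<Rightarrow> nat) \<Rightarrow> ('s \<Rightarrow> ('r, 'u) fo) \<Rightarrow> ('r \<times> 'u list) set \<Rightarrow> ('s \<times> 'u list) set" where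
  "apply_view S' ar' \<Phi> D =
     {(R', as). R' \<in> S' \<and> length as = ar' R' \<and> set as \<subseteq> adom D \<union> fo_consts (\<Phi> R')
                \<and> sat_adom D (\<Phi> R') as}"

definition image_pdb ::
  "'s set \<Rightarrow> ('s \<Rightarrow> nat) \<Rightarrow> ('s \<Rightarrow> ('r, 'u) fo) \<Rightarrow> ('r \<times> 'u list) set pmf \<Rightarrow> ('s \<times> 'u list) set pmf" where
  "image_pdb S' ar' \<Phi> P = map_pmf (apply_view S' ar' \<Phi>) P"

end

theory Submission
  imports Defs
begin

text \<open>
  For a tuple-independent PDB and a finite set \<open>F\<close> of facts, let \<open>\<lambda>\<^sub>F\<close> be the expected
  number of facts of \<open>F\<close> in the random instance \<open>D\<close>. Expanding \<open>|D \<inter> F|\<^sup>k\<close> into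
  indicators of facts and using independence gives \<open>E |D \<inter> F|\<^sup>k \<le> (k + \<lambda>\<^sub>F)\<^sup>k\<close>.
  By Chebyshev's inequality, \<open>|D \<inter> F| > \<lambda>\<^sub>F / 2\<close> with probability close to 1 when
  \<open>\<lambda>\<^sub>F\<close> is large; since \<open>|D|\<close> is almost surely finite, \<open>\<lambda>\<^sub>F\<close> is bounded uniformly
  in \<open>F\<close>, and then so are all moments of \<open>|D|\<close>.

  Under active domain semantics an FO-view only produces tuples over \<open>adom D\<close> and the
  finitely many constants of its formulas, so the size of the image is polynomial in \<open>|D|\<close>
  and its moments are dominated by those of \<open>|D|\<close>.
\<close>

lemma summable_on_pmf_iff_integrable:
  fixes g :: "'a \<Rightarrow> real"
  shows "(\<lambda>x. g x * pmf p x) summable_on set_pmf p \<longleftrightarrow> integrable (measure_pmf p) g"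
proof -
  have "(\<lambda>x. g x * pmf p x) summable_on set_pmf p \<longleftrightarrow> (\<lambda>x. g x * pmf p x) summable_on UNIV"
    by (rule summable_on_cong_neutral) (auto simp: set_pmf_eq)
  also have "\<dots> \<longleftrightarrow> Infinite_Sum.abs_summable_on (\<lambda>x. g x * pmf p x) UNIV"
    by (rule summable_on_iff_abs_summable_on_real)
  also have "\<dots> \<longleftrightarrow> integrable (count_space UNIV) (\<lambda>x. g x * pmf p x)"
    using abs_summable_equivalent[of "\<lambda>x. g x * pmf p x" UNIV]
    by (simp add: Infinite_Set_Sum.abs_summable_on_def)
  also have "\<dots> \<longleftrightarrow> integrable (density (count_space UNIV) (pmf p)) g"
    by (subst integrable_density) (auto simp: mult.commute)
  finally show ?thesis by (simp add: measure_pmf_eq_density)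
qed

lemma finite_moments_iff_integrable:
  "finite_moments P \<longleftrightarrow> (\<forall>k. integrable (measure_pmf P) (\<lambda>D. real (card D) ^ k))"
proof -
  have "integrable (measure_pmf P) (\<lambda>D. real (card D) ^ 0)"
    by simp
  moreover have "k = 0 \<or> 1 \<le> k" for k :: nat
    by linarith
  ultimately show ?thesis
    unfolding finite_moments_def summable_on_pmf_iff_integrable by metis
qed

lemma finite_moments_map_pmf_poly_bounded:
  assumes moments: "\<And>j. integrable (measure_pmf P) (\<lambda>D. real (card D) ^ j)"
    and bound: "\<And>D. D \<in> set_pmf P \<Longrightarrow> card (g D) \<le> K * (card D + 1) ^ m"
  shows "finite_moments (map_pmf g P)"
  unfolding finite_moments_iff_integrable
proof
  fix k
  let ?h = "\<lambda>D. real K ^ k * (real (card D) + 1) ^ (m * k)"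
  have "integrable (measure_pmf P) ?h"
    unfolding binomial_ring by (intro integrable_mult_right integrable_sum) (simp add: moments)
  then have "integrable (measure_pmf P) (\<lambda>D. real (card (g D)) ^ k)"
  proof (rule Bochner_Integration.integrable_bound)
    have "real (card (g D)) ^ k \<le> ?h D" if "D \<in> set_pmf P" for D
    proof -
      have "real (card (g D)) \<le> real K * (real (card D) + 1) ^ m"
        using of_nat_mono[OF bound[OF that], where 'a = real] by (simp add: add.commute)
      then have "real (card (g D)) ^ k \<le> (real K * (real (card D) + 1) ^ m) ^ k"
        by (rule power_mono) simp
      then show ?thesis
        by (simp add: power_mult_distrib power_mult)
    qed
    then show "AE D in measure_pmf P. norm (real (card (g D)) ^ k) \<le> norm (?h D)"
      by (simp add: AE_measure_pmf_iff)
  qed simp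
  then show "integrable (measure_pmf (map_pmf g P)) (\<lambda>E. real (card E) ^ k)"
    by simp
qed

section \<open>Moments of the number of facts from a finite set\<close>

definition fact_prob :: "'f set pmf \<Rightarrow> 'f \<Rightarrow> real" where
  "fact_prob P f = measure_pmf.prob P {D. f \<in> D}"

lemma fact_prob_nonneg: "fact_prob P f \<ge> 0"
  by (simp add: fact_prob_def)

definition count_moment :: "'f set pmf \<Rightarrow> 'f set \<Rightarrow> 'f set \<Rightarrow> nat \<Rightarrow> real" where
  "count_moment P A F k = (\<integral>D. of_bool (A \<subseteq> D) * real (card (D \<inter> F)) ^ k \<partial>measure_pmf P)"

lemma integrable_count_moment:
  assumes "finite F"
  shows "integrable (measure_pmf P) (\<lambda>D. of_bool (A \<subseteq> D) * real (card (D \<inter> F)) ^ k)"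
proof (rule measure_pmf.integrable_const_bound[where B = "real (card F) ^ k"])
  have "card (D \<inter> F) \<le> card F" for D
    using assms by (simp add: card_mono)
  then have "norm (of_bool (A \<subseteq> D) * real (card (D \<inter> F)) ^ k) \<le> real (card F) ^ k" for D
    by (auto intro: power_mono)
  then show "AE D in measure_pmf P. norm (of_bool (A \<subseteq> D) * real (card (D \<inter> F)) ^ k) \<le> real (card F) ^ k"
    by simp
qed simp

lemma count_moment_0: "count_moment P A F 0 = measure_pmf.prob P {D. A \<subseteq> D}"
proof -
  have "(\<lambda>D. of_bool (A \<subseteq> D) * real (card (D \<inter> F)) ^ 0) = indicator {D. A \<subseteq> D}"
    by (auto simp: indicator_def)
  then show ?thesis
    by (simp add: count_moment_def)
qed

lemma count_moment_Suc:
  assumes "finite F"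
  shows "count_moment P A F (Suc k) = (\<Sum>f\<in>F. count_moment P (insert f A) F k)"
proof -
  have expand: "of_bool (A \<subseteq> D) * real (card (D \<inter> F)) ^ Suc k
      = (\<Sum>f\<in>F. of_bool (insert f A \<subseteq> D) * real (card (D \<inter> F)) ^ k)" for D
  proof -
    have "real (card (D \<inter> F)) = (\<Sum>f\<in>F. of_bool (f \<in> D))"
      using assms by (simp add: Int_commute Int_def)
    then show ?thesis
      by (simp add: sum_distrib_left sum_distrib_right mult_ac)
  qed
  have "count_moment P A F (Suc k)
      = (\<integral>D. (\<Sum>f\<in>F. of_bool (insert f A \<subseteq> D) * real (card (D \<inter> F)) ^ k) \<partial>measure_pmf P)"
    unfolding count_moment_def expand ..
  also have "\<dots> = (\<Sum>f\<in>F. count_moment P (insert f A) F k)"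
    unfolding count_moment_def
    by (rule Bochner_Integration.integral_sum[OF integrable_count_moment[OF assms]])
  finally show ?thesis .
qed

lemma integral_card_Int_eq_sum_fact_prob:
  assumes "finite F"
  shows "(\<integral>D. real (card (D \<inter> F)) \<partial>measure_pmf P) = (\<Sum>f\<in>F. fact_prob P f)"
proof -
  have "(\<integral>D. real (card (D \<inter> F)) \<partial>measure_pmf P) = count_moment P {} F (Suc 0)"
    by (simp add: count_moment_def)
  then show ?thesis
    by (simp add: count_moment_Suc[OF assms] count_moment_0 fact_prob_def)
qed

section \<open>Tuple-independent PDBs have finite moments\<close>

lemma prob_superset_eq_prod_fact_prob:
  assumes "tuple_independent S ar P" "finite A" "A \<subseteq> facts S ar"
  shows "measure_pmf.prob P {D. A \<subseteq> D} = (\<Prod>f\<in>A. fact_prob P f)"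
  using assms unfolding tuple_independent_def fact_prob_def by (cases "A = {}") auto

lemma count_moment_le:
  assumes ti: "tuple_independent S ar P" and F: "finite F" "F \<subseteq> facts S ar"
  shows "A \<subseteq> F \<Longrightarrow> count_moment P A F k
    \<le> (\<Prod>f\<in>A. fact_prob P f) * (real (card A) + real k + (\<Sum>f\<in>F. fact_prob P f)) ^ k"
proof (induction k arbitrary: A)
  case 0
  then show ?case
    using F prob_superset_eq_prod_fact_prob[OF ti, of A]
    by (simp add: count_moment_0 finite_subset)
next
  case (Suc k)
  define \<Lambda> where "\<Lambda> = (\<Sum>f\<in>F. fact_prob P f)"
  define c where "c = real (card A) + real k + \<Lambda>"
  let ?\<pi> = "\<Prod>f\<in>A. fact_prob P f"
  have "finite A"
    using Suc.prems F(1) finite_subset by blast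
  have "c \<ge> 0" "?\<pi> \<ge> 0"
    by (simp_all add: c_def \<Lambda>_def sum_nonneg prod_nonneg fact_prob_nonneg)
  have insert_le: "count_moment P (insert f A) F k
      \<le> ?\<pi> * (of_bool (f \<in> A) + fact_prob P f) * (c + 1) ^ k" if "f \<in> F" for f
  proof (cases "f \<in> A")
    case True
    have "c ^ k \<le> (c + 1) ^ k"
      using \<open>c \<ge> 0\<close> by (simp add: power_mono)
    also have "\<dots> \<le> (1 + fact_prob P f) * (c + 1) ^ k"
      using \<open>c \<ge> 0\<close> fact_prob_nonneg[of P f] by simp
    finally have "?\<pi> * c ^ k \<le> ?\<pi> * ((1 + fact_prob P f) * (c + 1) ^ k)"
      using \<open>?\<pi> \<ge> 0\<close> by (rule mult_left_mono)
    moreover have "count_moment P (insert f A) F k \<le> ?\<pi> * c ^ k"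
      using Suc True by (simp add: insert_absorb c_def \<Lambda>_def)
    ultimately show ?thesis
      using True by (simp add: mult.assoc)
  next
    case False
    then show ?thesis
      using Suc.IH[of "insert f A"] Suc.prems that \<open>finite A\<close>
      by (simp add: c_def \<Lambda>_def algebra_simps)
  qed
  have card_A: "(\<Sum>f\<in>F. of_bool (f \<in> A)) = real (card A)"
    using Suc.prems F(1) by (simp add: Int_absorb1)
  have "count_moment P A F (Suc k) \<le> (\<Sum>f\<in>F. ?\<pi> * (of_bool (f \<in> A) + fact_prob P f) * (c + 1) ^ k)"
    unfolding count_moment_Suc[OF F(1)] by (rule sum_mono) (rule insert_le)
  also have "\<dots> = ?\<pi> * (c + 1) ^ k * (real (card A) + \<Lambda>)"
    by (simp add: card_A[symmetric] \<Lambda>_def sum.distrib sum_distrib_left sum_distrib_right algebra_simps)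
  also have "\<dots> \<le> ?\<pi> * (c + 1) ^ k * (c + 1)"
    using \<open>c \<ge> 0\<close> \<open>?\<pi> \<ge> 0\<close> by (intro mult_left_mono) (auto simp: c_def)
  also have "\<dots> = ?\<pi> * (real (card A) + real (Suc k) + \<Lambda>) ^ Suc k"
    by (simp add: c_def algebra_simps)
  finally show ?case
    by (simp add: \<Lambda>_def)
qed

lemma prob_card_ge_tendsto_0: "(\<lambda>N. measure_pmf.prob P {D. N \<le> card D}) \<longlonglongrightarrow> 0"
proof -
  have "(\<lambda>N. measure_pmf.prob P {D. N \<le> card D}) \<longlonglongrightarrow> measure_pmf.prob P (\<Inter>N. {D. N \<le> card D})"
    by (rule measure_pmf.finite_Lim_measure_decseq) (auto simp: decseq_def)
  moreover have "(\<Inter>N. {D. N \<le> card D}) = {}"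
    using Suc_n_not_le_n by blast
  ultimately show ?thesis
    by (metis measure_empty)
qed

lemma prob_count_le_half_mean:
  assumes ti: "tuple_independent S ar P" and F: "finite F" "F \<subseteq> facts S ar"
    and \<Lambda>_def: "\<Lambda> = (\<Sum>f\<in>F. fact_prob P f)" and "\<Lambda> > 0"
  shows "measure_pmf.prob P {D. real (card (D \<inter> F)) \<le> \<Lambda> / 2} \<le> 16 * (1 + \<Lambda>) / \<Lambda>\<^sup>2"
proof -
  let ?X = "\<lambda>D. real (card (D \<inter> F))"
  have int_X: "integrable (measure_pmf P) ?X" and int_X2: "integrable (measure_pmf P) (\<lambda>D. (?X D)\<^sup>2)"
    using integrable_count_moment[OF F(1), of P "{}" 1] integrable_count_moment[OF F(1), of P "{}" 2]
    by simp_all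
  have mean: "measure_pmf.expectation P ?X = \<Lambda>"
    using integral_card_Int_eq_sum_fact_prob[OF F(1)] by (simp add: \<Lambda>_def)
  have "measure_pmf.expectation P (\<lambda>D. (?X D)\<^sup>2) = count_moment P {} F 2"
    by (simp add: count_moment_def)
  also have "\<dots> \<le> (2 + \<Lambda>)\<^sup>2"
    using count_moment_le[OF ti F, of "{}" 2] by (simp add: \<Lambda>_def)
  finally have variance: "measure_pmf.variance P ?X \<le> 4 + 4 * \<Lambda>"
    unfolding measure_pmf.variance_eq[OF int_X int_X2] unfolding mean by (simp add: power2_eq_square algebra_simps)
  have "measure_pmf.prob P {D. ?X D \<le> \<Lambda> / 2}
      \<le> measure_pmf.prob P {D \<in> space (measure_pmf P). \<Lambda> / 2 \<le> \<bar>?X D - measure_pmf.expectation P ?X\<bar>}"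
    by (rule measure_pmf.finite_measure_mono) (auto simp: mean)
  also have "\<dots> \<le> measure_pmf.variance P ?X / (\<Lambda> / 2)\<^sup>2"
    using int_X2 \<open>\<Lambda> > 0\<close> by (intro measure_pmf.Chebyshev_inequality) simp_all
  also have "\<dots> \<le> (4 + 4 * \<Lambda>) / (\<Lambda> / 2)\<^sup>2"
    using variance by (simp add: divide_right_mono)
  also have "\<dots> = 16 * (1 + \<Lambda>) / \<Lambda>\<^sup>2"
    by (simp add: field_simps power2_eq_square)
  finally show ?thesis .
qed

lemma sum_fact_prob_bounded:
  assumes pdb: "is_pdb S ar P" and ti: "tuple_independent S ar P"
  obtains B where "\<And>F. finite F \<Longrightarrow> F \<subseteq> facts S ar \<Longrightarrow> (\<Sum>f\<in>F. fact_prob P f) \<le> B"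
proof -
  obtain N where N: "measure_pmf.prob P {D. N \<le> card D} < 1 / 2"
    using order_tendstoD(2)[OF prob_card_ge_tendsto_0, of "1 / 2" P]
    by (auto simp: eventually_sequentially)
  have "(\<Sum>f\<in>F. fact_prob P f) \<le> max (2 * real N) 64" if F: "finite F" "F \<subseteq> facts S ar" for F
  proof (rule ccontr)
    define \<Lambda> where "\<Lambda> = (\<Sum>f\<in>F. fact_prob P f)"
    let ?L = "{D. real (card (D \<inter> F)) \<le> \<Lambda> / 2}"
    assume "\<not> (\<Sum>f\<in>F. fact_prob P f) \<le> max (2 * real N) 64"
    then have large: "\<Lambda> > 2 * real N" "\<Lambda> > 64"
      by (auto simp: \<Lambda>_def)
    have "measure_pmf.prob P ?L \<le> 16 * (1 + \<Lambda>) / \<Lambda>\<^sup>2"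
      using prob_count_le_half_mean[OF ti F \<Lambda>_def] large by simp
    also have "\<dots> \<le> 32 / \<Lambda>"
      using large by (simp add: field_simps power2_eq_square)
    also have "\<dots> < 1 / 2"
      using large by (simp add: field_simps)
    finally have "1 / 2 < measure_pmf.prob P (UNIV - ?L)"
      using measure_pmf.prob_compl[of ?L] by simp
    also have "\<dots> \<le> measure_pmf.prob P {D. N \<le> card D}"
    proof (rule measure_pmf.finite_measure_mono_AE)
      have "N \<le> card D" if "D \<in> set_pmf P" "D \<notin> ?L" for D
      proof -
        have "finite D"
          using pdb that(1) by (auto simp: is_pdb_def is_instance_def)
        then have "card (D \<inter> F) \<le> card D"
          by (simp add: card_mono)
        then show ?thesis
          using that(2) large by simp
      qed
      then show "AE D in measure_pmf P. D \<in> UNIV - ?L \<longrightarrow> D \<in> {D. N \<le> card D}"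
        by (simp add: AE_measure_pmf_iff)
    qed simp
    finally show False
      using N by simp
  qed
  then show ?thesis
    using that by blast
qed

lemma integrable_card_pow_if_tuple_independent:
  assumes pdb: "is_pdb S ar P" and ti: "tuple_independent S ar P"
  shows "integrable (measure_pmf P) (\<lambda>D. real (card D) ^ j)"
proof -
  obtain B where B: "\<And>F. finite F \<Longrightarrow> F \<subseteq> facts S ar \<Longrightarrow> (\<Sum>f\<in>F. fact_prob P f) \<le> B"
    using sum_fact_prob_bounded[OF pdb ti] by blast
  have "(\<Sum>D\<in>G. real (card D) ^ j * pmf P D) \<le> (real j + max B 0) ^ j"
    if G: "G \<subseteq> set_pmf P" "finite G" for G
  proof -
    define F where "F = \<Union>G"
    have "finite F" "F \<subseteq> facts S ar"
      using G pdb by (auto simp: F_def is_pdb_def is_instance_def)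
    have "(\<Sum>D\<in>G. real (card D) ^ j * pmf P D)
        = (\<integral>D. real (card D) ^ j * indicator G D \<partial>measure_pmf P)"
      using G(2) by (subst integral_measure_pmf[of G]) (auto simp: indicator_def mult.commute)
    also have "\<dots> \<le> count_moment P {} F j"
      unfolding count_moment_def
    proof (rule integral_mono)
      have "norm (real (card D) ^ j * indicator G D) \<le> (\<Sum>E\<in>G. real (card E) ^ j)" for D
        using G(2) member_le_sum[of D G "\<lambda>E. real (card E) ^ j"]
        by (cases "D \<in> G") (auto simp: sum_nonneg)
      then show "integrable (measure_pmf P) (\<lambda>D. real (card D) ^ j * indicator G D)"
        by (intro measure_pmf.integrable_const_bound AE_I2) auto
      show "real (card D) ^ j * indicator G D \<le> of_bool ({} \<subseteq> D) * real (card (D \<inter> F)) ^ j" for D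
        by (cases "D \<in> G") (auto simp: F_def Int_absorb2 Union_upper)
    qed (rule integrable_count_moment[OF \<open>finite F\<close>])
    also have "\<dots> \<le> (real j + (\<Sum>f\<in>F. fact_prob P f)) ^ j"
      using count_moment_le[OF ti \<open>finite F\<close> \<open>F \<subseteq> facts S ar\<close>, of "{}" j] by simp
    also have "\<dots> \<le> (real j + max B 0) ^ j"
      using B[OF \<open>finite F\<close> \<open>F \<subseteq> facts S ar\<close>]
      by (intro power_mono) (auto simp: sum_nonneg fact_prob_nonneg)
    finally show ?thesis .
  qed
  then have "(\<lambda>D. real (card D) ^ j * pmf P D) summable_on set_pmf P"
    by (intro nonneg_bdd_above_summable_on bdd_aboveI2) auto
  then show ?thesis
    by (simp add: summable_on_pmf_iff_integrable)
qed

section \<open>Size of the image of an FO-view\<close>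

lemma finite_term_consts: "finite (term_consts t)"
  by (cases t) auto

lemma finite_fo_consts: "finite (fo_consts \<phi>)"
  by (induction \<phi>) (auto simp: finite_term_consts)

lemma finite_adom: "finite D \<Longrightarrow> finite (adom D)"
  by (auto simp: adom_def)

lemma card_adom_le:
  assumes "is_instance S ar D" "finite S"
  shows "card (adom D) \<le> Max (ar ` S) * card D"
proof -
  have D: "finite D" "D \<subseteq> facts S ar"
    using assms(1) by (auto simp: is_instance_def)
  have "adom D = (\<Union>f\<in>D. set (snd f))"
    by (auto simp: adom_def)
  then have "card (adom D) \<le> (\<Sum>f\<in>D. card (set (snd f)))"
    using D(1) by (simp add: card_UN_le)
  also have "\<dots> \<le> (\<Sum>f\<in>D. Max (ar ` S))"
  proof (rule sum_mono)
    fix f assume "f \<in> D"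
    then have "fst f \<in> S" "length (snd f) = ar (fst f)"
      using D(2) by (auto simp: facts_def)
    then have "length (snd f) \<le> Max (ar ` S)"
      using assms(2) by simp
    then show "card (set (snd f)) \<le> Max (ar ` S)"
      using card_length le_trans by blast
  qed
  also have "\<dots> = Max (ar ` S) * card D"
    by simp
  finally show ?thesis .
qed

lemma card_apply_view_le:
  assumes "finite S'" "finite (adom D)"
  shows "card (apply_view S' ar' \<Phi> D) \<le> (\<Sum>R'\<in>S'. card (adom D \<union> fo_consts (\<Phi> R')) ^ ar' R')"
proof -
  let ?tuples = "\<lambda>R'. {as. set as \<subseteq> adom D \<union> fo_consts (\<Phi> R') \<and> length as = ar' R'}"
  have finite_tuples: "finite (?tuples R')" for R'
    using assms(2) finite_fo_consts by (intro finite_lists_length_eq) auto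
  have "apply_view S' ar' \<Phi> D \<subseteq> (\<Union>R'\<in>S'. Pair R' ` ?tuples R')"
    unfolding apply_view_def by auto
  then have "card (apply_view S' ar' \<Phi> D) \<le> card (\<Union>R'\<in>S'. Pair R' ` ?tuples R')"
    using assms(1) finite_tuples by (intro card_mono) auto
  also have "\<dots> \<le> (\<Sum>R'\<in>S'. card (Pair R' ` ?tuples R'))"
    using assms(1) by (rule card_UN_le)
  also have "\<dots> \<le> (\<Sum>R'\<in>S'. card (?tuples R'))"
    by (intro sum_mono card_image_le finite_tuples)
  also have "\<dots> = (\<Sum>R'\<in>S'. card (adom D \<union> fo_consts (\<Phi> R')) ^ ar' R')"
    using assms(2) finite_fo_consts by (intro sum.cong refl card_lists_length_eq) auto
  finally show ?thesis .
qed

lemma card_apply_view_poly_bound: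
  fixes \<Phi> :: "'s \<Rightarrow> ('r, 'u) fo"
  assumes "finite S" "finite S'"
  obtains K m where
    "\<And>D. is_instance S ar D \<Longrightarrow> card (apply_view S' ar' \<Phi> D) \<le> K * (card D + 1) ^ m"
proof -
  define c where "c = Max ((\<lambda>R'. card (fo_consts (\<Phi> R'))) ` S')"
  define L where "L = Max (ar ` S) + c + 1"
  define m where "m = Max (ar' ` S')"
  have "card (apply_view S' ar' \<Phi> D) \<le> card S' * L ^ m * (card D + 1) ^ m"
    if D: "is_instance S ar D" for D
  proof -
    have "finite (adom D)"
      using D by (auto simp: is_instance_def finite_adom)
    have "card (adom D \<union> fo_consts (\<Phi> R')) ^ ar' R' \<le> (L * (card D + 1)) ^ m" if "R' \<in> S'" for R'
    proof -
      have "card (adom D \<union> fo_consts (\<Phi> R')) \<le> card (adom D) + card (fo_consts (\<Phi> R'))"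
        by (rule card_Un_le)
      also have "\<dots> \<le> Max (ar ` S) * card D + c"
        using card_adom_le[OF D assms(1)] that assms(2) by (intro add_mono) (auto simp: c_def)
      also have "\<dots> \<le> L * (card D + 1)"
        by (simp add: L_def algebra_simps)
      finally have "card (adom D \<union> fo_consts (\<Phi> R')) ^ ar' R' \<le> (L * (card D + 1)) ^ ar' R'"
        by (rule power_mono) simp
      also have "\<dots> \<le> (L * (card D + 1)) ^ m"
        using that assms(2) by (intro power_increasing) (auto simp: m_def L_def)
      finally show ?thesis .
    qed
    then have "(\<Sum>R'\<in>S'. card (adom D \<union> fo_consts (\<Phi> R')) ^ ar' R') \<le> (\<Sum>R'\<in>S'. (L * (card D + 1)) ^ m)"
      by (rule sum_mono)
    also have "\<dots> = card S' * L ^ m * (card D + 1) ^ m"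
      by (simp only: sum_constant of_nat_id power_mult_distrib mult.assoc)
    finally show ?thesis
      using card_apply_view_le[OF assms(2) \<open>finite (adom D)\<close>, of ar' \<Phi>] by linarith
  qed
  then show ?thesis
    using that by blast
qed

theorem proposition3p7:
  fixes S :: "'r set" and ar :: "'r \<Rightarrow> nat"
    and S' :: "'s set" and ar' :: "'s \<Rightarrow> nat"
    and P :: "('r \<times> 'u::{countable,infinite} list) set pmf"
    and \<Phi> :: "'s \<Rightarrow> ('r, 'u) fo"
  assumes "schema S"
    and "is_pdb S ar P"
    and "tuple_independent S ar P"
    and "fo_view S' ar' \<Phi>"
  shows "finite_moments (image_pdb S' ar' \<Phi> P)"
proof -
  have "finite S" "finite S'"
    using assms(1,4) by (auto simp: schema_def fo_view_def)
  then obtain K m where bound: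
    "\<And>D. is_instance S ar D \<Longrightarrow> card (apply_view S' ar' \<Phi> D) \<le> K * (card D + 1) ^ m"
    using card_apply_view_poly_bound by blast
  show ?thesis
    unfolding image_pdb_def
  proof (rule finite_moments_map_pmf_poly_bounded)
    show "integrable (measure_pmf P) (\<lambda>D. real (card D) ^ j)" for j
      using integrable_card_pow_if_tuple_independent[OF assms(2,3)] .
    show "card (apply_view S' ar' \<Phi> D) \<le> K * (card D + 1) ^ m" if "D \<in> set_pmf P" for D
      using bound that assms(2) by (simp add: is_pdb_def)
  qed
qed

end
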